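(* For integer $T\ge1$, $$\lim_{T\to\infty}\frac{2T-G(1/T,T)}{2T}=\frac{3e-2}{2(e^2+e+1)}\approx0.2771.$$
   Context: For $p\in(0,1)$, $T\in\mathbb{N}^+$ and $q=1-p$, define $$G(p,T)=\frac{2T+q^{2T-1}\big[\frac{2}{p}-(\frac{p}{2}-2)(T-1)\big]+q^{T-1}\big(2-\frac{2}{p}-\frac{p}{2}-\frac{Tp}{2}+T^2p\big)}{q^{2T-1}+q^{T-1}(T-1)p+Tp}.$$ This is the average peak AoI of the discrete-time Geo-D dual-queue system: one zero-wait sensor with geometric service time of parameter $p$ and one with deterministic service time $T$ slots. The value $2T=2/\mu$ is the average peak AoI of either single queue (geometric or deterministic) with service rate $\mu=1/T$. The expression inside the limit is therefore the relative average peak AoI reduction when both sensors have service rate $\mu=1/T$. *)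

theory Defs
  imports "HOL-Analysis.Analysis"
begin

text \<open>Average peak AoI of the discrete-time Geo-D dual-queue system,
  p in (0,1) the geometric parameter, T the deterministic service time (slots), q = 1 - p.\<close>
definition G :: "real \<Rightarrow> nat \<Rightarrow> real" where
  "G p T = (let q = 1 - p; t = real T in
     (2 * t + q ^ (2 * T - 1) * (2 / p - (p / 2 - 2) * (t - 1))
        + q ^ (T - 1) * (2 - 2 / p - p / 2 - t * p / 2 + t ^ 2 * p))
     / (q ^ (2 * T - 1) + q ^ (T - 1) * (t - 1) * p + t * p))"

end

theory Submission
  imports Defs
begin

text \<open>With \<open>p = 1/T\<close> the quantity \<open>A = q^T = (1 - 1/T)^T\<close> tends to \<open>e\<^sup>-\<^sup>1\<close>. Since
  \<open>q^(T-1) = A/q\<close>, \<open>q^(2T-1) = A\<^sup>2/q\<close> and \<open>(T - 1) p = q\<close>, the relative reduction is a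
  rational function of \<open>A\<close> and \<open>p\<close> alone, continuous at \<open>(e\<^sup>-\<^sup>1, 0)\<close>; the limit is its
  value there.\<close>

definition relative_reduction :: "real \<Rightarrow> real \<Rightarrow> real" where
  "relative_reduction A p =
     1 - (2 + A\<^sup>2 / (1 - p) * (2 - (p / 2 - 2) * (1 - p)) + A / (1 - p) * (3 / 2 * p - 1 - p\<^sup>2 / 2))
         / (2 * (A\<^sup>2 / (1 - p) + A + 1))"

lemma relative_reduction_G:
  assumes "T \<ge> 2"
  shows "(2 * real T - G (1 / real T) T) / (2 * real T)
           = relative_reduction ((1 - 1 / real T) ^ T) (1 / real T)"
proof -
  define t p q A where "t = real T" and "p = 1 / t" and "q = 1 - p" and "A = q ^ T"
  have t: "t \<ge> 2" using assms t_def by simp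
  then have q: "q > 0" using p_def q_def by simp
  have powT1: "q ^ (T - 1) = A / q" and pow2T1: "q ^ (2 * T - 1) = A\<^sup>2 / q"
    using assms q power_diff[of q 1 T] power_diff[of q 1 "2 * T"]
    by (simp_all add: A_def power_mult[symmetric] mult.commute)
  have qt: "(t - 1) * p = q" using t by (simp add: p_def q_def field_simps)
  define M where "M = 2 + A\<^sup>2 / q * (2 - (p / 2 - 2) * q) + A / q * (3 / 2 * p - 1 - p\<^sup>2 / 2)"
  define D where "D = A\<^sup>2 / q + A + 1"
  have D: "D > 0" using q by (simp add: D_def A_def add_pos_pos)
  have tp: "t * p = 1" using t by (simp add: p_def)
  have sq: "t * (2 - (p / 2 - 2) * q) = 2 / p - (p / 2 - 2) * (t - 1)"
    using t by (simp add: p_def q_def field_simps)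
  have lin: "t * (3 / 2 * p - 1 - p\<^sup>2 / 2) = 2 - 2 / p - p / 2 - t * p / 2 + t ^ 2 * p"
    using t by (simp add: p_def field_simps power2_eq_square)
  have num: "2 * t + q ^ (2 * T - 1) * (2 / p - (p / 2 - 2) * (t - 1))
               + q ^ (T - 1) * (2 - 2 / p - p / 2 - t * p / 2 + t ^ 2 * p) = t * M"
    unfolding powT1 pow2T1 M_def sq[symmetric] lin[symmetric] by (simp add: algebra_simps)
  have den: "q ^ (2 * T - 1) + q ^ (T - 1) * (t - 1) * p + t * p = D"
    using q qt tp unfolding powT1 pow2T1 D_def by (simp add: mult.assoc)
  have "G p T = t * M / D"
    using num den by (simp add: G_def Let_def t_def q_def)
  then have "(2 * t - G p T) / (2 * t) = 1 - M / (2 * D)"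
    using t D by (simp add: field_simps)
  also have "\<dots> = relative_reduction A p"
    by (simp add: relative_reduction_def M_def D_def q_def)
  finally show ?thesis by (simp add: t_def p_def q_def A_def)
qed

lemma square_plus_self_plus_one_pos: "(x::real)\<^sup>2 + x + 1 > 0"
proof -
  have "x\<^sup>2 + x + 1 = (x + 1 / 2)\<^sup>2 + 3 / 4" by (simp add: power2_eq_square algebra_simps)
  then show ?thesis by (metis add_nonneg_pos zero_le_power2 zero_less_divide_iff zero_less_numeral)
qed

lemma relative_reduction_inverse_0:
  assumes "e > 0"
  shows "relative_reduction (inverse e) 0 = (3 * e - 2) / (2 * (e\<^sup>2 + e + 1))"
proof -
  have "relative_reduction (inverse e) 0
          = (3 * inverse e - 2 * (inverse e)\<^sup>2) / (2 * ((inverse e)\<^sup>2 + inverse e + 1))"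
    using square_plus_self_plus_one_pos[of "inverse e"]
    by (simp add: relative_reduction_def field_simps)
  also have "\<dots> = ((3 * e - 2) / e\<^sup>2) / (2 * (e\<^sup>2 + e + 1) / e\<^sup>2)"
    using assms by (simp add: field_simps power2_eq_square)
  also have "\<dots> = (3 * e - 2) / (2 * (e\<^sup>2 + e + 1))"
    using assms by simp
  finally show ?thesis .
qed

theorem mainTheorem7:
  shows "(\<lambda>T::nat. (2 * real T - G (1 / real T) T) / (2 * real T))
           \<longlonglongrightarrow> (3 * exp 1 - 2) / (2 * (exp 1 ^ 2 + exp 1 + 1))"
proof -
  have A: "(\<lambda>T. (1 - 1 / real T) ^ T) \<longlonglongrightarrow> exp (-1)"
    using tendsto_exp_limit_sequentially[of "-1"] by simp
  have "(exp (-1))\<^sup>2 + exp (-1) + 1 \<noteq> (0::real)"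
    using square_plus_self_plus_one_pos by (metis less_irrefl)
  then have "(\<lambda>T. relative_reduction ((1 - 1 / real T) ^ T) (1 / real T))
               \<longlonglongrightarrow> relative_reduction (exp (-1)) 0"
    unfolding relative_reduction_def by (intro tendsto_intros A lim_1_over_n) auto
  also have "relative_reduction (exp (-1)) 0 = (3 * exp 1 - 2) / (2 * (exp 1 ^ 2 + exp 1 + 1))"
    using relative_reduction_inverse_0[of "exp 1"] by (simp add: exp_minus)
  finally have "(\<lambda>T. relative_reduction ((1 - 1 / real T) ^ T) (1 / real T))
                  \<longlonglongrightarrow> (3 * exp 1 - 2) / (2 * (exp 1 ^ 2 + exp 1 + 1))" .
  moreover have "\<forall>\<^sub>F T in sequentially. relative_reduction ((1 - 1 / real T) ^ T) (1 / real T)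
                   = (2 * real T - G (1 / real T) T) / (2 * real T)"
    using eventually_ge_at_top[of 2] by eventually_elim (simp add: relative_reduction_G)
  ultimately show ?thesis by (rule Lim_transform_eventually)
qed

end
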